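(* (i) Every hyperbolic homogeneous polynomial $f\in\mathbb{R}[x,y]$ has at least one real linear factor, and every real linear factor of a hyperbolic homogeneous polynomial has multiplicity one. (ii) An elliptic homogeneous polynomial $f\in\mathbb{R}[x,y]$ has no real linear factors.
   Context: For a polynomial $f\in\mathbb{R}[x,y]$, its Hessian polynomial is $\mathrm{Hess}\,f=f_{xx}f_{yy}-f_{xy}^2$. A homogeneous polynomial $f\in\mathbb{R}[x,y]$ is called hyperbolic (resp. elliptic) if its Hessian polynomial $\mathrm{Hess}\,f$ has no real linear factors and $\mathrm{Hess}\,f(x,y)\le 0$ (resp. $\ge 0$) for all $(x,y)\in\mathbb{R}^2$. A real linear factor means a factor of the form $ax+by$ with $(a,b)\in\mathbb{R}^2\setminus\{0\}$. *)

theory Defs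
  imports "HOL-Computational_Algebra.Polynomial"
begin

text \<open>Real polynomials in two variables x, y are represented as
  R[x][y] = real poly poly: the outer variable is y, the coefficients are
  polynomials in x. This ring is isomorphic to R[x,y], so divisibility
  below is divisibility in R[x,y].\<close>

type_synonym bipoly = "real poly poly"

definition eval2 :: "bipoly \<Rightarrow> real \<Rightarrow> real \<Rightarrow> real" where
  "eval2 p x y = poly (map_poly (\<lambda>c. poly c x) p) y"

definition dX :: "bipoly \<Rightarrow> bipoly" where
  "dX p = map_poly pderiv p"

definition dY :: "bipoly \<Rightarrow> bipoly" where
  "dY p = pderiv p"

definition hess :: "bipoly \<Rightarrow> bipoly" where
  "hess f = dX (dX f) * dY (dY f) - (dX (dY f))^2"

text \<open>The linear form a x + b y.\<close>
definition linear_form :: "real \<Rightarrow> real \<Rightarrow> bipoly" where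
  "linear_form a b = [: [:0, a:], [:b:] :]"

definition homogeneous :: "bipoly \<Rightarrow> bool" where
  "homogeneous f \<longleftrightarrow> (\<exists>d. \<forall>i j. coeff (coeff f j) i \<noteq> 0 \<longrightarrow> i + j = d)"

definition has_real_linear_factor :: "bipoly \<Rightarrow> bool" where
  "has_real_linear_factor f \<longleftrightarrow> (\<exists>a b. (a, b) \<noteq> (0, 0) \<and> linear_form a b dvd f)"

definition hyperbolic :: "bipoly \<Rightarrow> bool" where
  "hyperbolic f \<longleftrightarrow> homogeneous f \<and> \<not> has_real_linear_factor (hess f)
     \<and> (\<forall>x y. eval2 (hess f) x y \<le> 0)"

definition elliptic :: "bipoly \<Rightarrow> bool" where
  "elliptic f \<longleftrightarrow> homogeneous f \<and> \<not> has_real_linear_factor (hess f)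
     \<and> (\<forall>x y. eval2 (hess f) x y \<ge> 0)"

end

theory Submission
  imports Defs
begin

text \<open>Write \<open>f = l g\<close> with \<open>l = a x + b y\<close>. Differentiating twice gives
  \<open>Hess f = l R - (a g\<^sub>y - b g\<^sub>x)\<^sup>2\<close>, so on the line \<open>l = 0\<close> the Hessian is \<open>-(a g\<^sub>y - b g\<^sub>x)\<^sup>2\<close>.
  If \<open>Hess f \<ge> 0\<close> it therefore vanishes on that line, and if \<open>l\<^sup>2\<close> divides \<open>f\<close> then \<open>l\<close> divides
  \<open>a g\<^sub>y - b g\<^sub>x\<close>; either way \<open>l\<close> divides \<open>Hess f\<close>.

  For existence, let \<open>p(x) = f(x,1)\<close> and let \<open>x\<^sub>0\<close> minimise \<open>p\<^sup>2\<close>. If \<open>p(x\<^sub>0) = 0\<close> then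
  \<open>x - x\<^sub>0 y\<close> divides \<open>f\<close>. Otherwise \<open>p'(x\<^sub>0) = 0\<close> and \<open>p(x\<^sub>0) p''(x\<^sub>0) \<ge> 0\<close>, and Euler's relations
  give \<open>Hess f(x\<^sub>0,1) = d(d-1) p(x\<^sub>0) p''(x\<^sub>0) \<ge> 0\<close>. A Hessian that is \<open>\<le> 0\<close> must then vanish at
  \<open>(x\<^sub>0,1)\<close>, hence by homogeneity on the whole line through it, so \<open>x - x\<^sub>0 y\<close> divides it.\<close>

lemma poly_map_poly_poly:
  "poly (map_poly (\<lambda>c. poly c x) P) (poly r x) = poly (poly P r) x"
  by (induction P) (auto simp: map_poly_pCons)

lemma eval2_eq: "eval2 p x y = poly (poly p [:y:]) x"
  unfolding eval2_def using poly_map_poly_poly[of x p "[:y:]"] by simp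

lemma eval2_0 [simp]: "eval2 0 x y = 0"
  by (simp add: eval2_def)

lemma eval2_pCons: "eval2 (pCons c p) x y = poly c x + y * eval2 p x y"
  by (simp add: eval2_eq)

lemma eval2_mult [simp]: "eval2 (p * q) x y = eval2 p x y * eval2 q x y"
  and eval2_add [simp]: "eval2 (p + q) x y = eval2 p x y + eval2 q x y"
  and eval2_diff [simp]: "eval2 (p - q) x y = eval2 p x y - eval2 q x y"
  and eval2_power [simp]: "eval2 (p ^ n) x y = eval2 p x y ^ n"
  and eval2_const [simp]: "eval2 [:[:k:]:] x y = k"
  and eval2_X [simp]: "eval2 [:[:0, 1:]:] x y = x"
  and eval2_Y [simp]: "eval2 [:0, 1:] x y = y"
  and eval2_linear_form [simp]: "eval2 (linear_form a b) x y = a * x + b * y"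
  by (simp_all add: eval2_eq poly_power linear_form_def)

lemma dX_add [simp]: "dX (p + q) = dX p + dX q"
  and dX_diff [simp]: "dX (p - q) = dX p - dX q"
  and dX_const [simp]: "dX [:[:k:]:] = 0"
  and dX_linear_form [simp]: "dX (linear_form a b) = [:[:a:]:]"
  by (auto intro!: poly_eqI simp: dX_def coeff_map_poly pderiv_add pderiv_diff
      map_poly_pCons linear_form_def pderiv_pCons)

lemma dY_add [simp]: "dY (p + q) = dY p + dY q"
  and dY_diff [simp]: "dY (p - q) = dY p - dY q"
  and dY_const [simp]: "dY [:[:k:]:] = 0"
  and dY_linear_form [simp]: "dY (linear_form a b) = [:[:b:]:]"
  by (simp_all add: dY_def pderiv_add pderiv_diff linear_form_def pderiv_pCons)

lemma dX_mult: "dX (p * q) = dX p * q + p * dX q"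
proof (rule poly_eqI)
  fix n
  have pderiv_sum: "pderiv (sum h A) = (\<Sum>x\<in>A. pderiv (h x))" for h :: "nat \<Rightarrow> real poly" and A
    using higher_pderiv_sum[of 1 h A] by simp
  have "pderiv (\<Sum>i\<le>n. coeff p i * coeff q (n - i)) =
      (\<Sum>i\<le>n. pderiv (coeff p i) * coeff q (n - i)) + (\<Sum>i\<le>n. coeff p i * pderiv (coeff q (n - i)))"
    by (simp add: pderiv_sum pderiv_mult sum.distrib[symmetric] algebra_simps)
  then show "coeff (dX (p * q)) n = coeff (dX p * q + p * dX q) n"
    by (simp add: dX_def coeff_map_poly coeff_mult)
qed

lemma dY_mult: "dY (p * q) = dY p * q + p * dY q"
  by (simp add: dY_def pderiv_mult)

lemma dY_dX: "dY (dX f) = dX (dY f)"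
  by (rule poly_eqI) (simp add: dX_def dY_def coeff_map_poly coeff_pderiv pderiv_mult pderiv_add)

lemma hess_linear_form_mult:
  fixes a b :: real and g :: bipoly
  defines "l \<equiv> linear_form a b" and "A \<equiv> [:[:a:]:]" and "B \<equiv> [:[:b:]:]"
  shows "\<exists>R. hess (l * g) = l * R - (A * dY g - B * dX g)^2"
proof -
  define gx gy where "gx = dX g" and "gy = dY g"
  have const: "dX A = 0" "dY A = 0" "dX B = 0" "dY B = 0"
    by (simp_all add: A_def B_def)
  have fy: "dY (l * g) = B*g + l*gy"
    by (simp add: dY_mult l_def B_def gy_def)
  have fxx: "dX (dX (l * g)) = 2*A*gx + l*dX gx"
    by (simp add: dX_mult const l_def A_def[symmetric] gx_def algebra_simps)
  have fyy: "dY (dY (l * g)) = 2*B*gy + l*dY gy"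
    by (simp add: fy dY_mult const l_def B_def[symmetric] gy_def algebra_simps)
  have fxy: "dX (dY (l * g)) = B*gx + A*gy + l*dX gy"
    unfolding fy by (simp add: dX_mult const l_def A_def[symmetric] gx_def algebra_simps)
  have "hess (l * g) = l * (2*A*gx*dY gy + 2*B*dX gx*gy + l*dX gx*dY gy
      - 2*(B*gx + A*gy)*dX gy - l*(dX gy)^2) - (A*gy - B*gx)^2"
    unfolding hess_def fxx fyy fxy by (simp add: algebra_simps power2_eq_square)
  then show ?thesis
    unfolding gx_def gy_def by blast
qed

lemma linear_form_dvd_if_vanishes:
  assumes ab: "(a, b) \<noteq> (0, 0)"
    and vanish: "\<And>u v. a * u + b * v = 0 \<Longrightarrow> eval2 P u v = 0"
  shows "linear_form a b dvd P"
proof (cases "b = 0")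
  case False
  \<comment> \<open>\<open>P\<close> vanishes under \<open>y := -(a/b) x\<close>, so the linear polynomial \<open>y + (a/b) x\<close> in \<open>y\<close> divides it.\<close>
  define r where "r = [:0, -a/b:]"
  have "poly (poly P r) x = 0" for x
    using vanish[of x "poly r x"] False
    by (simp add: r_def eval2_def poly_map_poly_poly[symmetric])
  then have "[:-r, 1:] dvd P"
    using poly_all_0_iff_0 poly_eq_0_iff_dvd by blast
  moreover have "[:-r, 1:] = linear_form a b * [:[:1/b:]:]"
    using False by (simp add: r_def linear_form_def)
  ultimately show ?thesis
    using dvd_mult_left by metis
next
  case True
  then have "a \<noteq> 0"
    using ab by simp
  have "poly (map_poly (\<lambda>c. poly c 0) P) v = 0" for v
    using vanish[of 0 v] True by (simp add: eval2_def)
  then have "map_poly (\<lambda>c. poly c 0) P = 0"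
    using poly_all_0_iff_0 by blast
  then have "poly (coeff P j) 0 = 0" for j
    by (metis coeff_0 coeff_map_poly poly_0)
  then have "[:0, a:] dvd coeff P j" for j
    using \<open>a \<noteq> 0\<close> poly_eq_0_iff_dvd[of "coeff P j" 0] smult_dvd[of "[:0, 1:]" _ a] by simp
  moreover have "linear_form a b = [:[:0, a:]:]"
    using True by (simp add: linear_form_def)
  ultimately show ?thesis
    by (simp add: const_poly_dvd_iff)
qed

lemma linear_form_dvd_hess_if_square_dvd:
  fixes a b :: real
  assumes "(linear_form a b)^2 dvd f"
  shows "linear_form a b dvd hess f"
proof -
  define l where "l = linear_form a b"
  define A where "A = ([:[:a:]:] :: bipoly)"
  define B where "B = ([:[:b:]:] :: bipoly)"
  obtain k where "f = l^2 * k"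
    using assms l_def by (auto elim: dvdE)
  then have f: "f = l * (l * k)"
    by (simp add: power2_eq_square)
  have "A * dY (l * k) - B * dX (l * k) = l * (A * dY k - B * dX k)"
    by (simp add: dX_mult dY_mult l_def A_def B_def algebra_simps)
  with hess_linear_form_mult[of a b "l * k"] obtain R
    where "hess f = l * R - (l * (A * dY k - B * dX k))^2"
    unfolding f l_def A_def B_def by metis
  then have "hess f = l * (R - l * (A * dY k - B * dX k)^2)"
    by (simp add: algebra_simps power2_eq_square)
  then show ?thesis
    unfolding l_def by (metis dvdI)
qed

lemma linear_form_dvd_hess_if_dvd_nonneg:
  fixes a b :: real
  assumes ab: "(a, b) \<noteq> (0, 0)" and dvd: "linear_form a b dvd f"
    and nonneg: "\<And>x y. eval2 (hess f) x y \<ge> 0"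
  shows "linear_form a b dvd hess f"
proof (rule linear_form_dvd_if_vanishes[OF ab])
  define l where "l = linear_form a b"
  obtain g where f: "f = l * g"
    using dvd l_def by (auto elim: dvdE)
  from hess_linear_form_mult[of a b g] obtain R S where hess_f: "hess f = l * R - S^2"
    unfolding f l_def by metis
  fix u v
  assume "a * u + b * v = 0"
  then have "eval2 (hess f) u v = - (eval2 S u v)\<^sup>2"
    by (simp add: hess_f l_def)
  then show "eval2 (hess f) u v = 0"
    using nonneg[of u v] by (smt (verit) zero_le_power2)
qed

definition hom_deg :: "bipoly \<Rightarrow> nat \<Rightarrow> bool" where
  "hom_deg f d \<longleftrightarrow> (\<forall>i j. coeff (coeff f j) i \<noteq> 0 \<longrightarrow> i + j = d)"

lemma homogeneous_iff_hom_deg: "homogeneous f \<longleftrightarrow> (\<exists>d. hom_deg f d)"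
  by (simp add: homogeneous_def hom_deg_def)

lemma coeff_coeff_dX: "coeff (coeff (dX f) j) i = real (Suc i) * coeff (coeff f j) (Suc i)"
  by (simp add: dX_def coeff_map_poly coeff_pderiv)

lemma coeff_coeff_dY: "coeff (coeff (dY f) j) i = real (Suc j) * coeff (coeff f (Suc j)) i"
  by (simp add: dY_def coeff_pderiv of_nat_poly)

lemma hom_deg_dX: "hom_deg f d \<Longrightarrow> hom_deg (dX f) (d - 1)"
  unfolding hom_deg_def coeff_coeff_dX by (metis add_Suc diff_Suc_1 mult_eq_0_iff)

lemma hom_deg_dY: "hom_deg f d \<Longrightarrow> hom_deg (dY f) (d - 1)"
  unfolding hom_deg_def coeff_coeff_dY by (metis add_Suc_right diff_Suc_1 mult_eq_0_iff)

lemma euler_identity: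
  assumes "hom_deg f d"
  shows "[:[:0, 1:]:] * dX f + [:0, 1:] * dY f = [:[:real d:]:] * f"
proof (rule poly_eqI, rule poly_eqI)
  fix j i
  have "coeff (coeff ([:[:0, 1:]:] * dX f) j) i = real i * coeff (coeff f j) i"
    by (cases i) (simp_all add: coeff_coeff_dX coeff_pCons)
  moreover have "coeff (coeff ([:0, 1:] * dY f) j) i = real j * coeff (coeff f j) i"
    by (cases j) (simp_all add: coeff_coeff_dY)
  ultimately have "coeff (coeff ([:[:0, 1:]:] * dX f + [:0, 1:] * dY f) j) i
      = real (i + j) * coeff (coeff f j) i"
    by (simp add: distrib_right)
  then show "coeff (coeff ([:[:0, 1:]:] * dX f + [:0, 1:] * dY f) j) i
      = coeff (coeff ([:[:real d:]:] * f) j) i"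
    using assms unfolding hom_deg_def by (cases "coeff (coeff f j) i = 0") auto
qed

lemma euler:
  assumes "hom_deg f d"
  shows "x * eval2 (dX f) x y + y * eval2 (dY f) x y = real d * eval2 f x y"
  using arg_cong[OF euler_identity[OF assms], of "\<lambda>q. eval2 q x y"]
  by (simp only: eval2_add eval2_mult eval2_X eval2_Y eval2_const)

lemma poly_scale_if_monom:
  fixes c :: "real poly"
  assumes "\<forall>i. coeff c i \<noteq> 0 \<longrightarrow> i = d"
  shows "poly c (t * x) = t^d * poly c x"
proof -
  have "c = monom (coeff c d) d"
    by (rule poly_eqI) (use assms in \<open>auto simp: coeff_monom\<close>)
  then show ?thesis
    by (metis poly_monom power_mult_distrib mult.left_commute)
qed

lemma eval2_scale:
  "hom_deg f d \<Longrightarrow> eval2 f (t * x) (t * y) = t^d * eval2 f x y"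
proof (induction f arbitrary: d rule: pCons_induct)
  case 0
  then show ?case by simp
next
  case (pCons c f)
  have c: "\<forall>i. coeff c i \<noteq> 0 \<longrightarrow> i = d"
    using pCons.prems[unfolded hom_deg_def, rule_format, where j = 0] by simp
  have f: "coeff (coeff f j) i \<noteq> 0 \<Longrightarrow> i + Suc j = d" for i j
    using pCons.prems[unfolded hom_deg_def, rule_format, where i = i and j = "Suc j"] by simp
  show ?case
  proof (cases d)
    case 0
    then have "f = 0"
      using f by (intro poly_eqI) (metis add_is_0 coeff_0 nat.distinct(1))
    then show ?thesis
      using poly_scale_if_monom[OF c] by (simp add: eval2_pCons)
  next
    case (Suc d')
    then have "hom_deg f d'"
      using f unfolding hom_deg_def by auto
    then show ?thesis
      using pCons.IH poly_scale_if_monom[OF c] Suc by (simp add: eval2_pCons algebra_simps)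
  qed
qed

lemma eval2_hess_scale:
  assumes "hom_deg f d"
  shows "eval2 (hess f) (t * x) (t * y) = (t^(d - 2))^2 * eval2 (hess f) x y"
proof -
  have "hom_deg (dX (dX f)) (d - 2)" "hom_deg (dY (dY f)) (d - 2)" "hom_deg (dX (dY f)) (d - 2)"
    using hom_deg_dX hom_deg_dY assms by (metis diff_diff_left one_add_one)+
  then show ?thesis
    unfolding hess_def by (simp add: eval2_scale power2_eq_square algebra_simps)
qed

lemma linear_form_dvd_if_homogeneous_root:
  assumes "\<And>t. eval2 f (t * x0) t = t^k * eval2 f x0 1" and "eval2 f x0 1 = 0"
  shows "linear_form 1 (-x0) dvd f"
proof (rule linear_form_dvd_if_vanishes)
  fix u v :: real
  assume "1 * u + - x0 * v = 0"
  then have "u = v * x0"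
    by simp
  then show "eval2 f u v = 0"
    using assms by simp
qed simp

lemma poly_dX_const: "poly (dX f) [:c:] = pderiv (poly f [:c:])"
  by (induction f) (auto simp: dX_def map_poly_pCons pderiv_add pderiv_mult pderiv_smult)

lemma eval2_hess_at_critical_point:
  assumes "hom_deg f d"
  defines "p \<equiv> poly f [:1:]"
  assumes "poly (pderiv p) x0 = 0"
  shows "eval2 (hess f) x0 1 = real d * real (d - 1) * (poly p x0 * poly (pderiv (pderiv p)) x0)"
proof -
  have eval_at_1: "eval2 q x0 1 = poly (poly q [:1:]) x0" for q
    by (simp add: eval2_eq)
  define P0 P2 where "P0 = poly p x0" and "P2 = poly (pderiv (pderiv p)) x0"
  define Fy Fxy Fyy
    where "Fy = eval2 (dY f) x0 1" and "Fxy = eval2 (dX (dY f)) x0 1" and "Fyy = eval2 (dY (dY f)) x0 1"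
  have fx: "eval2 (dX f) x0 1 = 0" and fxx: "eval2 (dX (dX f)) x0 1 = P2"
    using assms(3) by (simp_all add: eval_at_1 poly_dX_const p_def P2_def)
  have "Fy = real d * P0"
    using euler[OF assms(1), of x0 1] fx by (simp add: Fy_def P0_def eval_at_1 p_def)
  moreover have "Fxy = - x0 * P2"
    using euler[OF hom_deg_dX[OF assms(1)], of x0 1] fx fxx by (simp add: Fxy_def dY_dX)
  moreover have "x0 * Fxy + Fyy = real (d - 1) * Fy"
    using euler[OF hom_deg_dY[OF assms(1)], of x0 1] by (simp add: Fxy_def Fyy_def Fy_def)
  moreover have "eval2 (hess f) x0 1 = P2 * Fyy - Fxy^2"
    by (simp add: hess_def Fxy_def Fyy_def fxx)
  ultimately show ?thesis
    unfolding P0_def P2_def by (simp add: algebra_simps power2_eq_square)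
qed

lemma poly_nonneg_attains_min:
  fixes g :: "real poly"
  assumes nonneg: "\<And>x. poly g x \<ge> 0"
  obtains x0 where "\<And>x. poly g x0 \<le> poly g x"
proof (cases "degree g = 0")
  case True
  then show ?thesis
    using that by (metis degree_eq_zeroE order_refl poly_pCons poly_0 mult_zero_right add_0_right)
next
  case False
  then have "filterlim (\<lambda>x. norm (poly g x)) at_top at_infinity"
    using filterlim_poly_at_infinity filterlim_at_infinity_imp_norm_at_top by blast
  then have "eventually (\<lambda>x. poly g 0 + 1 \<le> norm (poly g x)) at_infinity"
    by (simp add: filterlim_at_top)
  then obtain b where b: "\<And>x::real. b \<le> norm x \<Longrightarrow> poly g 0 + 1 \<le> norm (poly g x)"
    unfolding eventually_at_infinity by blast
  have "continuous_on {-\<bar>b\<bar>..\<bar>b\<bar>} (poly g)"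
    by (intro continuous_intros)
  then obtain x0 where min_on: "\<forall>x\<in>{-\<bar>b\<bar>..\<bar>b\<bar>}. poly g x0 \<le> poly g x"
    using continuous_attains_inf[of "{-\<bar>b\<bar>..\<bar>b\<bar>}" "poly g"] by auto
  have "poly g x0 \<le> poly g x" for x
  proof (cases "\<bar>x\<bar> \<le> \<bar>b\<bar>")
    case True
    then show ?thesis
      using min_on by (simp add: abs_le_iff)
  next
    case False
    then have "poly g 0 + 1 \<le> poly g x"
      using b[of x] nonneg[of x] by simp
    moreover have "poly g x0 \<le> poly g 0"
      using min_on by simp
    ultimately show ?thesis
      by simp
  qed
  then show ?thesis
    using that by blast
qed

lemma poly_pderiv_eq_0_at_min:
  fixes g :: "real poly"
  assumes "\<And>x. poly g x0 \<le> poly g x"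
  shows "poly (pderiv g) x0 = 0"
  by (rule DERIV_local_min[OF poly_DERIV[of g x0], of 1]) (use assms in auto)

lemma poly_pderiv2_nonneg_at_min:
  fixes g :: "real poly"
  assumes min: "\<And>x. poly g x0 \<le> poly g x"
  shows "poly (pderiv (pderiv g)) x0 \<ge> 0"
proof (rule ccontr)
  assume "\<not> ?thesis"
  then obtain d where "d > 0" and dec: "\<And>h. 0 < h \<Longrightarrow> h < d \<Longrightarrow> poly (pderiv g) (x0 + h) < poly (pderiv g) x0"
    using DERIV_neg_dec_right[OF poly_DERIV[of "pderiv g" x0]] by (metis not_le)
  obtain z where z: "x0 < z" "z < x0 + d/2"
    and mvt: "poly g (x0 + d/2) - poly g x0 = (d/2) * poly (pderiv g) z"
    using poly_MVT[of x0 "x0 + d/2" g] \<open>d > 0\<close> by auto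
  have "poly (pderiv g) z < 0"
    using dec[of "z - x0"] z poly_pderiv_eq_0_at_min[OF min] by simp
  then have "(d/2) * poly (pderiv g) z < 0"
    using \<open>d > 0\<close> by (simp add: mult_pos_neg)
  then have "poly g (x0 + d/2) < poly g x0"
    using mvt by simp
  then show False
    using min[of "x0 + d/2"] by simp
qed

lemma has_real_linear_factor_if_hess_nonpos:
  assumes "homogeneous f" and nonpos: "\<And>x y. eval2 (hess f) x y \<le> 0"
    and no_factor: "\<not> has_real_linear_factor (hess f)"
  shows "has_real_linear_factor f"
proof -
  obtain d where hom: "hom_deg f d"
    using assms(1) homogeneous_iff_hom_deg by blast
  define p where "p = poly f [:1:]"
  obtain x0 where min: "\<And>x. poly (p * p) x0 \<le> poly (p * p) x"
    using poly_nonneg_attains_min[of "p * p"] by auto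
  have factor: "has_real_linear_factor q" if "linear_form 1 (-x0) dvd q" for q
    using that unfolding has_real_linear_factor_def by (metis one_neq_zero prod.inject)
  show ?thesis
  proof (cases "poly p x0 = 0")
    case True
    have "linear_form 1 (-x0) dvd f"
    proof (rule linear_form_dvd_if_homogeneous_root)
      show "eval2 f (t * x0) t = t^d * eval2 f x0 1" for t
        using eval2_scale[OF hom, of t x0 1] by simp
      show "eval2 f x0 1 = 0"
        using True by (simp add: eval2_eq p_def)
    qed
    then show ?thesis
      by (rule factor)
  next
    case False
    have "2 * poly p x0 * poly (pderiv p) x0 = 0"
      using poly_pderiv_eq_0_at_min[OF min] by (simp add: pderiv_mult)
    then have critical: "poly (pderiv p) x0 = 0"
      using False by simp
    have "2 * (poly (pderiv p) x0)^2 + 2 * (poly p x0 * poly (pderiv (pderiv p)) x0) \<ge> 0"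
      using poly_pderiv2_nonneg_at_min[OF min]
      by (simp add: pderiv_mult pderiv_add algebra_simps power2_eq_square)
    then have "poly p x0 * poly (pderiv (pderiv p)) x0 \<ge> 0"
      using critical by simp
    then have "eval2 (hess f) x0 1 \<ge> 0"
      unfolding eval2_hess_at_critical_point[OF hom critical[unfolded p_def], folded p_def] by simp
    then have "eval2 (hess f) x0 1 = 0"
      using nonpos[of x0 1] by simp
    then have "linear_form 1 (-x0) dvd hess f"
      using eval2_hess_scale[OF hom, of _ x0 1] by (intro linear_form_dvd_if_homogeneous_root) simp_all
    then show ?thesis
      using factor no_factor by blast
  qed
qed

theorem lemma1:
  shows "(\<forall>f. hyperbolic f \<longrightarrow>
            has_real_linear_factor f \<and>
            (\<forall>a b. (a, b) \<noteq> (0::real, 0::real) \<and> linear_form a b dvd f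
                 \<longrightarrow> \<not> (linear_form a b)^2 dvd f))
       \<and> (\<forall>f. elliptic f \<longrightarrow> \<not> has_real_linear_factor f)"
proof (intro conjI allI impI)
  fix f
  assume "hyperbolic f"
  then show "has_real_linear_factor f"
    unfolding hyperbolic_def using has_real_linear_factor_if_hess_nonpos by blast
next
  fix f a b
  assume "hyperbolic f" and "(a, b) \<noteq> (0::real, 0::real) \<and> linear_form a b dvd f"
  then show "\<not> (linear_form a b)^2 dvd f"
    unfolding hyperbolic_def has_real_linear_factor_def
    using linear_form_dvd_hess_if_square_dvd by blast
next
  fix f
  assume "elliptic f"
  then show "\<not> has_real_linear_factor f"
    unfolding elliptic_def has_real_linear_factor_def
    using linear_form_dvd_hess_if_dvd_nonneg by blast
qed

end
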